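(* Let $\boldsymbol\Sigma\in\mathbb R^{r\times r}$ be symmetric positive definite, $\boldsymbol\alpha\in\mathbb R^{k\times p}$, $\mathbf U\in\mathbb R^{r\times k}$ of full column rank, $\boldsymbol\beta=\mathbf U\boldsymbol\alpha$, $\mathcal B=\mathrm{span}(\boldsymbol\beta)$ and $\mathcal A=\mathrm{span}(\boldsymbol\alpha)$. Let $u=\dim\mathcal E_{\boldsymbol\Sigma}(\mathcal B)$, $\boldsymbol\Gamma\in\mathbb R^{r\times u}$ a semi-orthogonal basis of $\mathcal E_{\boldsymbol\Sigma}(\mathcal B)$ and $(\boldsymbol\Gamma,\boldsymbol\Gamma_0)$ an orthogonal matrix. Assume $\mathbf U=(\boldsymbol\Gamma\mathbf G,\boldsymbol\Gamma_0\mathbf G_0)$ where $\mathbf G\in\mathbb R^{u\times u_1}$ and $\mathbf G_0\in\mathbb R^{(r-u)\times(k-u_1)}$ both have full column rank (so $u_1\le u$). Let $\boldsymbol\Sigma_{D|S}=(\mathbf U^T\boldsymbol\Sigma^{-1}\mathbf U)^{-1}\in\mathbb R^{k\times k}$. Then $\dim\{\mathcal E_{\boldsymbol\Sigma_{D|S}}(\mathcal A)\}\le u_1\le\dim\{\mathcal E_{\boldsymbol\Sigma}(\mathcal B)\}$.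
   Context: For a symmetric matrix $\mathbf M\in\mathbb R^{m\times m}$, a subspace $\mathcal R\subseteq\mathbb R^m$ is a reducing subspace of $\mathbf M$ if $\mathbf M\mathcal R\subseteq\mathcal R$; for a subspace $\mathcal S\subseteq\mathbb R^m$, the $\mathbf M$-envelope $\mathcal E_{\mathbf M}(\mathcal S)$ is the smallest reducing subspace of $\mathbf M$ containing $\mathcal S$. Interpretation: in the model $\mathbf Y=\mathbf U\boldsymbol\alpha_0+\mathbf U\boldsymbol\alpha\mathbf X+\boldsymbol\varepsilon$, $\boldsymbol\varepsilon\sim N(0,\boldsymbol\Sigma)$, with $\mathbf Y_D=(\mathbf U^T\mathbf U)^{-1}\mathbf U^T\mathbf Y$ and $\mathbf Y_S=\mathbf U_0^T\mathbf Y$ ($\mathbf U_0$ a semi-orthogonal basis of $\mathrm{span}(\mathbf U)^\perp$), $\boldsymbol\Sigma_{D|S}$ is the conditional covariance of $\mathbf Y_D$ given $(\mathbf X,\mathbf Y_S)$. *)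

theory Defs
  imports "Jordan_Normal_Form.DL_Rank" "Jordan_Normal_Form.Gauss_Jordan_Elimination"
begin

text \<open>Matrices are JNF matrices of type real mat with explicit dimensions;
  subspaces of R^m are sets of vectors in carrier_vec m.\<close>

definition reducing_subspace :: "nat \<Rightarrow> real mat \<Rightarrow> real vec set \<Rightarrow> bool" where
  "reducing_subspace m M R \<longleftrightarrow>
     subspace class_ring R (module_vec TYPE(real) m) \<and> (\<forall>x\<in>R. M *\<^sub>v x \<in> R)"

definition envelope :: "nat \<Rightarrow> real mat \<Rightarrow> real vec set \<Rightarrow> real vec set" where
  "envelope m M S = \<Inter> {R. reducing_subspace m M R \<and> S \<subseteq> R}"

definition subspace_dim :: "nat \<Rightarrow> real vec set \<Rightarrow> nat" where
  "subspace_dim m W = vectorspace.dim class_ring ((module_vec TYPE(real) m)\<lparr>carrier := W\<rparr>)"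

definition colspan :: "nat \<Rightarrow> real mat \<Rightarrow> real vec set" where
  "colspan m A = vec_space.col_space m A"

definition hcat :: "'a mat \<Rightarrow> 'a mat \<Rightarrow> 'a mat" where
  "hcat A B = mat (dim_row A) (dim_col A + dim_col B)
     (\<lambda>(i,j). if j < dim_col A then A $$ (i,j) else B $$ (i, j - dim_col A))"

definition minv :: "real mat \<Rightarrow> real mat" where
  "minv A = the (mat_inverse A)"

definition sym_pos_def :: "nat \<Rightarrow> real mat \<Rightarrow> bool" where
  "sym_pos_def m S \<longleftrightarrow> S \<in> carrier_mat m m \<and> transpose_mat S = S \<and>
     (\<forall>x\<in>carrier_vec m. x \<noteq> 0\<^sub>v m \<longrightarrow> x \<bullet> (S *\<^sub>v x) > 0)"

end

theory Submission
  imports Defs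
begin

(* Let P = Gamma Gamma^T be the orthogonal projection onto the envelope and D = diag(I_u1, 0).
   Since the envelope reduces Sigma, P commutes with Sigma and hence with Sigma^-1, while the
   block form of U gives U D = P U. Therefore D commutes with U^T Sigma^-1 U and with its
   inverse Sigma_D|S. As U alpha lies in the envelope, U D alpha = P U alpha = U alpha, so
   D alpha = alpha because U has full column rank. The range of D is thus a reducing subspace
   of Sigma_D|S containing span(alpha); it contains the envelope, whose dimension is therefore
   at most rank D = u1. The other inequality is just u1 = rank G <= u. *)

section \<open>Envelopes, dimensions and column spaces\<close>

lemma subspace_carrier_vec: "subspace class_ring (carrier_vec m) (module_vec TYPE(real) m)"
  unfolding subspace_def submodule_def
  by (auto simp: vec_vs vec_module module_vec_simps)

lemma subspace_Inter:
  assumes "F \<noteq> {}" "\<And>X. X \<in> F \<Longrightarrow> subspace class_ring X (module_vec TYPE(real) m)"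
  shows "subspace class_ring (\<Inter>F) (module_vec TYPE(real) m)"
  using assms unfolding subspace_def submodule_def
  by (auto simp: vec_vs) blast

lemma reducing_subspace_envelope:
  assumes "M \<in> carrier_mat m m" and "S \<subseteq> carrier_vec m"
  shows "reducing_subspace m M (envelope m M S)"
proof -
  let ?F = "{R. reducing_subspace m M R \<and> S \<subseteq> R}"
  have "carrier_vec m \<in> ?F"
    using assms subspace_carrier_vec unfolding reducing_subspace_def by auto
  then have "subspace class_ring (\<Inter>?F) (module_vec TYPE(real) m)"
    by (intro subspace_Inter) (auto simp: reducing_subspace_def)
  then show ?thesis
    unfolding envelope_def reducing_subspace_def by auto
qed

lemma subset_envelope: "S \<subseteq> envelope m M S"
  unfolding envelope_def by auto

lemma envelope_least: "reducing_subspace m M R \<Longrightarrow> S \<subseteq> R \<Longrightarrow> envelope m M S \<subseteq> R"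
  unfolding envelope_def by auto

lemma (in vectorspace) fin_dim_subspace:
  assumes X: "subspace K X V" and fd: "fin_dim"
  shows "vectorspace.fin_dim K (vs X)"
proof -
  interpret W: vectorspace K "vs X" using subspace_is_vs[OF X] .
  have sm: "submodule K X V" using X by (simp add: subspace_def)
  have bound: "finite A \<and> card A \<le> dim" if "A \<subseteq> carrier (vs X) \<and> W.lin_indpt A" for A
  proof -
    have AX: "A \<subseteq> X" using that by simp
    have "lin_indpt A" using that span_li_not_depend(2)[OF AX sm] by simp
    moreover have "A \<subseteq> carrier V" using AX sm by (auto simp: submodule_def)
    ultimately show ?thesis using li_le_dim[OF fd] by auto
  qed
  have "W.lin_indpt {}" by (simp add: W.finite_lin_indpt2)
  then obtain A where A: "finite A" "maximal A (\<lambda>S. S \<subseteq> carrier (vs X) \<and> W.lin_indpt S)"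
    using maximal_exists[of "\<lambda>S. S \<subseteq> carrier (vs X) \<and> W.lin_indpt S" dim "{}"] bound by blast
  have "W.gen_set A" using W.max_li_is_gen[OF A(2)] .
  moreover have "A \<subseteq> carrier (vs X)" using A(2) by (auto simp: maximal_def)
  ultimately show ?thesis unfolding W.fin_dim_def using A(1) by blast
qed

lemma subspace_dim_mono:
  assumes X: "subspace class_ring X (module_vec TYPE(real) m)"
    and W: "subspace class_ring W (module_vec TYPE(real) m)" and "X \<subseteq> W"
  shows "subspace_dim m X \<le> subspace_dim m W"
proof -
  interpret vec_space "TYPE(real)" m .
  interpret W: vectorspace class_ring "vs W" using subspace_is_vs[OF W] .
  have "subspace class_ring X (vs W)" using nested_subspaces[OF W X \<open>X \<subseteq> W\<close>] .
  then have "vectorspace.dim class_ring ((vs W)\<lparr>carrier := X\<rparr>) \<le> W.dim"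
    using W.subspace_dim fin_dim_subspace[OF W] fin_dim_subspace[OF X] by simp
  then show ?thesis unfolding subspace_dim_def by simp
qed

lemma colspan_eq:
  "A \<in> carrier_mat m n \<Longrightarrow> colspan m A = {A *\<^sub>v x | x. x \<in> carrier_vec n}"
  unfolding colspan_def by (auto simp: vec_space.col_space_eq)

lemma col_mem_colspan:
  assumes A: "A \<in> carrier_mat m n" and j: "j < n"
  shows "col A j \<in> colspan m A"
proof -
  have "col A j = A *\<^sub>v unit_vec n j"
    using A j by (intro eq_vecI) auto
  then show ?thesis
    using A j unfolding colspan_eq[OF A] by (intro CollectI exI[of _ "unit_vec n j"]) simp
qed

lemma subspace_colspan:
  assumes "A \<in> carrier_mat m n"
  shows "subspace class_ring (colspan m A) (module_vec TYPE(real) m)"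
proof -
  interpret vec_space "TYPE(real)" m .
  show ?thesis unfolding colspan_def col_space_def
    by (rule span_is_subspace) (use cols_dim[of A] assms in auto)
qed

lemma rank_eq_subspace_dim_colspan: "vec_space.rank m A = subspace_dim m (colspan m A)"
  unfolding subspace_dim_def colspan_def vec_space.rank_def vec_space.col_space_def ..

lemma colspan_mult_subset:
  assumes "A \<in> carrier_mat m n" and "B \<in> carrier_mat n p"
  shows "colspan m (A * B) \<subseteq> colspan m A"
  using assms by (auto simp: colspan_eq[of _ m p] colspan_eq[of A m n])

lemma rank_mult_le:
  fixes A B :: "real mat"
  assumes "A \<in> carrier_mat m n" and "B \<in> carrier_mat n p"
  shows "vec_space.rank m (A * B) \<le> vec_space.rank m A"
  unfolding rank_eq_subspace_dim_colspan
  using assms by (intro subspace_dim_mono subspace_colspan colspan_mult_subset) auto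

lemma rank_le_dim_row:
  fixes A :: "real mat"
  assumes "A \<in> carrier_mat m n"
  shows "vec_space.rank m A \<le> m"
proof -
  interpret vec_space "TYPE(real)" m .
  have "colspan m A \<subseteq> carrier_vec m"
    using assms by (auto simp: colspan_eq)
  then have "subspace_dim m (colspan m A) \<le> subspace_dim m (carrier_vec m)"
    using assms by (intro subspace_dim_mono subspace_colspan subspace_carrier_vec)
  also have "subspace_dim m (carrier_vec m) = m"
    unfolding subspace_dim_def using dim_is_n by (simp add: module_vec_def)
  finally show ?thesis unfolding rank_eq_subspace_dim_colspan .
qed

section \<open>Full column rank and positive definite matrices\<close>

lemma (in vec_space) distinct_cols_if_full_rank:
  assumes A: "A \<in> carrier_mat n nc" and rk: "rank A = nc"
  shows "distinct (cols A)"
proof (rule ccontr)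
  assume nd: "\<not> distinct (cols A)"
  obtain S where S: "maximal S (\<lambda>T. T \<subseteq> set (cols A) \<and> lin_indpt T)"
    using maximal_exists[of "\<lambda>T. T \<subseteq> set (cols A) \<and> lin_indpt T" "card (set (cols A))" "{}"]
    by (meson List.finite_set card_mono empty_iff empty_subsetI finite_lin_indpt2 rev_finite_subset)
  then have "card S \<le> card (set (cols A))" by (simp add: card_mono maximal_def)
  also have "card (set (cols A)) < nc"
    using nd A card_distinct card_length cols_length carrier_matD(2) nat_less_le by metis
  finally show False using rank_card_indpt[OF A S] rk by simp
qed

lemma full_rank_mult_vec_eq_zero_imp:
  fixes A :: "real mat"
  assumes A: "A \<in> carrier_mat n nc" and rk: "vec_space.rank n A = nc"
    and v: "v \<in> carrier_vec nc" and Av: "A *\<^sub>v v = 0\<^sub>v n"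
  shows "v = 0\<^sub>v nc"
proof (rule ccontr)
  interpret vec_space "TYPE(real)" n .
  have dist: "distinct (cols A)" using distinct_cols_if_full_rank[OF A rk] .
  assume "v \<noteq> 0\<^sub>v nc"
  then have "lin_dep (set (cols A))" using lin_depI[OF A v _ Av dist] by blast
  then show False using full_rank_lin_indpt[OF A rk dist] by blast
qed

lemma full_rank_mult_left_cancel:
  fixes A X Y :: "real mat"
  assumes A: "A \<in> carrier_mat n nc" and rk: "vec_space.rank n A = nc"
    and X: "X \<in> carrier_mat nc p" and Y: "Y \<in> carrier_mat nc p" and eq: "A * X = A * Y"
  shows "X = Y"
proof (rule mat_col_eqI)
  fix j assume "j < dim_col Y"
  then have j: "j < p" using Y by simp
  have cols: "col X j \<in> carrier_vec nc" "col Y j \<in> carrier_vec nc"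
    using X Y j by auto
  have "A *\<^sub>v (col X j - col Y j) = A *\<^sub>v col X j - A *\<^sub>v col Y j"
    using A cols by (simp add: mult_minus_distrib_mat_vec)
  also have "\<dots> = col (A * X) j - col (A * Y) j"
    by (simp only: col_mult2[OF A X j] col_mult2[OF A Y j])
  also have "\<dots> = 0\<^sub>v n" using eq A Y j by simp
  finally have "col X j - col Y j = 0\<^sub>v nc"
    using full_rank_mult_vec_eq_zero_imp[OF A rk] cols by simp
  then show "col X j = col Y j"
    using cols by (metis comm_add_vec minus_add_minus_vec minus_cancel_vec uminus_eq_vec zero_minus_vec)
qed (use X Y in auto)

lemma minv_if_injective:
  fixes A :: "real mat"
  assumes A: "A \<in> carrier_mat n n"
    and inj: "\<And>v. v \<in> carrier_vec n \<Longrightarrow> A *\<^sub>v v = 0\<^sub>v n \<Longrightarrow> v = 0\<^sub>v n"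
  shows "minv A \<in> carrier_mat n n" "A * minv A = 1\<^sub>m n" "minv A * A = 1\<^sub>m n"
proof -
  have "det A \<noteq> 0" using det_0_iff_vec_prod_zero_field[OF A] inj by auto
  then obtain B where "mat_inverse A = Some B"
    using mat_inverse(1)[OF A] det_non_zero_imp_unit[OF A] by (metis not_None_eq)
  then show "minv A \<in> carrier_mat n n" "A * minv A = 1\<^sub>m n" "minv A * A = 1\<^sub>m n"
    using mat_inverse(2)[OF A] unfolding minv_def by auto
qed

lemma
  assumes "sym_pos_def m S"
  shows sym_pos_def_minv_carrier: "minv S \<in> carrier_mat m m"
    and sym_pos_def_mult_minv: "S * minv S = 1\<^sub>m m"
    and sym_pos_def_minv_mult: "minv S * S = 1\<^sub>m m"
proof -
  have S: "S \<in> carrier_mat m m" and pos: "\<And>x. x \<in> carrier_vec m \<Longrightarrow> x \<noteq> 0\<^sub>v m \<Longrightarrow> x \<bullet> (S *\<^sub>v x) > 0"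
    using assms unfolding sym_pos_def_def by auto
  have "v = 0\<^sub>v m" if "v \<in> carrier_vec m" "S *\<^sub>v v = 0\<^sub>v m" for v
    using pos[of v] that by auto
  then show "minv S \<in> carrier_mat m m" "S * minv S = 1\<^sub>m m" "minv S * S = 1\<^sub>m m"
    using minv_if_injective[OF S] by auto
qed

lemma sym_pos_def_minv:
  assumes "sym_pos_def m S"
  shows "sym_pos_def m (minv S)"
proof -
  have S: "S \<in> carrier_mat m m" "transpose_mat S = S"
    and pos: "\<And>x. x \<in> carrier_vec m \<Longrightarrow> x \<noteq> 0\<^sub>v m \<Longrightarrow> x \<bullet> (S *\<^sub>v x) > 0"
    using assms unfolding sym_pos_def_def by auto
  define T where "T = minv S"
  have T: "T \<in> carrier_mat m m" "S * T = 1\<^sub>m m" "T * S = 1\<^sub>m m"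
    unfolding T_def using assms sym_pos_def_minv_carrier sym_pos_def_mult_minv sym_pos_def_minv_mult
    by auto
  have "transpose_mat T * S = 1\<^sub>m m"
    using T S transpose_mult[of S m m T m] by (metis transpose_one)
  then have "transpose_mat T = transpose_mat T * (S * T)"
    using T by simp
  also have "\<dots> = (transpose_mat T * S) * T"
    using T S by (simp add: assoc_mult_mat[of "transpose_mat T" m m S m T m])
  also have "\<dots> = T"
    using T \<open>transpose_mat T * S = 1\<^sub>m m\<close> by simp
  finally have "transpose_mat T = T" .
  moreover have "y \<bullet> (T *\<^sub>v y) > 0" if y: "y \<in> carrier_vec m" "y \<noteq> 0\<^sub>v m" for y
  proof -
    define z where "z = T *\<^sub>v y"
    have z: "z \<in> carrier_vec m" "S *\<^sub>v z = y"
      unfolding z_def using T y S by (auto simp flip: assoc_mult_mat_vec)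
    then have "z \<noteq> 0\<^sub>v m" using y S by auto
    then have "z \<bullet> (S *\<^sub>v z) > 0" using pos z(1) by blast
    moreover have "y \<bullet> (T *\<^sub>v y) = z \<bullet> (S *\<^sub>v z)"
      using z y by (simp add: comm_scalar_prod[of y m "T *\<^sub>v y"] z_def)
    ultimately show ?thesis by simp
  qed
  ultimately show ?thesis using T(1) unfolding sym_pos_def_def T_def[symmetric] by simp
qed

lemma sym_pos_def_congruence:
  assumes S: "sym_pos_def m S" and U: "U \<in> carrier_mat m n" and rk: "vec_space.rank m U = n"
  shows "sym_pos_def n (transpose_mat U * S * U)"
proof -
  have S': "S \<in> carrier_mat m m" "transpose_mat S = S"
    and pos: "\<And>x. x \<in> carrier_vec m \<Longrightarrow> x \<noteq> 0\<^sub>v m \<Longrightarrow> x \<bullet> (S *\<^sub>v x) > 0"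
    using S unfolding sym_pos_def_def by auto
  have "transpose_mat (transpose_mat U * S * U) = transpose_mat U * transpose_mat (transpose_mat U * S)"
    using U S' transpose_mult[of "transpose_mat U * S" n m U n] by simp
  also have "\<dots> = transpose_mat U * S * U"
    using U S' transpose_mult[of "transpose_mat U" n m S m] by (simp add: assoc_mult_mat[of _ n m _ m _ n])
  finally have "transpose_mat (transpose_mat U * S * U) = transpose_mat U * S * U" .
  moreover have "x \<bullet> ((transpose_mat U * S * U) *\<^sub>v x) > 0"
    if x: "x \<in> carrier_vec n" "x \<noteq> 0\<^sub>v n" for x
  proof -
    have Ux: "U *\<^sub>v x \<in> carrier_vec m" "U *\<^sub>v x \<noteq> 0\<^sub>v m"
      using full_rank_mult_vec_eq_zero_imp[OF U rk] x U by auto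
    have "(transpose_mat U * S * U) *\<^sub>v x = transpose_mat U *\<^sub>v (S *\<^sub>v (U *\<^sub>v x))"
      using U S' x
      by (simp add: assoc_mult_mat_vec[of "transpose_mat U" n m "S * U" n x]
          assoc_mult_mat_vec[of S m m U n x])
    then have "x \<bullet> ((transpose_mat U * S * U) *\<^sub>v x) = (U *\<^sub>v x) \<bullet> (S *\<^sub>v (U *\<^sub>v x))"
      using U S' x transpose_vec_mult_scalar[OF U x(1), of "S *\<^sub>v (U *\<^sub>v x)"]
      by (simp add: comm_scalar_prod[of x n] comm_scalar_prod[of "U *\<^sub>v x" m])
    then show ?thesis using pos Ux by simp
  qed
  ultimately show ?thesis using U S' unfolding sym_pos_def_def by auto
qed

section \<open>Commuting matrices and orthogonal projections\<close>

lemma mat_commute_inverse: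
  fixes A B A' :: "'a :: semiring_1 mat"
  assumes A: "A \<in> carrier_mat n n" and B: "B \<in> carrier_mat n n" and A': "A' \<in> carrier_mat n n"
    and inv: "A * A' = 1\<^sub>m n" "A' * A = 1\<^sub>m n" and AB: "A * B = B * A"
  shows "A' * B = B * A'"
proof -
  have "A' * B = A' * B * (A * A')" using A B A' inv by simp
  also have "\<dots> = A' * (A * B) * A'" using A B A' AB by (simp add: assoc_mult_mat[of _ n n _ n _ n])
  also have "\<dots> = (A' * A) * B * A'" using A B A' by (simp add: assoc_mult_mat[of _ n n _ n _ n])
  also have "\<dots> = B * A'" using B A' inv by simp
  finally show ?thesis .
qed

lemma reducing_subspace_colspan_if_commute:
  assumes M: "M \<in> carrier_mat m m" and D: "D \<in> carrier_mat m m" and MD: "M * D = D * M"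
  shows "reducing_subspace m M (colspan m D)"
  unfolding reducing_subspace_def
proof (intro conjI ballI)
  show "subspace class_ring (colspan m D) (module_vec TYPE(real) m)"
    using subspace_colspan[OF D] .
  fix x assume "x \<in> colspan m D"
  then obtain y where y: "y \<in> carrier_vec m" "x = D *\<^sub>v y" using colspan_eq[OF D] by auto
  have "M *\<^sub>v x = D *\<^sub>v (M *\<^sub>v y)"
    using M D y by (simp flip: assoc_mult_mat_vec add: MD)
  then show "M *\<^sub>v x \<in> colspan m D" using colspan_eq[OF D] M y by auto
qed

lemma envelope_dim_le_rank_if_commute:
  assumes M: "M \<in> carrier_mat m m" and D: "D \<in> carrier_mat m m" and MD: "M * D = D * M"
    and A: "A \<in> carrier_mat m n" and DA: "D * A = A"
  shows "subspace_dim m (envelope m M (colspan m A)) \<le> vec_space.rank m D"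
proof -
  have "colspan m A \<subseteq> colspan m D"
    using colspan_mult_subset[OF D A] DA by simp
  then have "envelope m M (colspan m A) \<subseteq> colspan m D"
    by (intro envelope_least reducing_subspace_colspan_if_commute[OF M D MD])
  moreover have "reducing_subspace m M (envelope m M (colspan m A))"
    using A by (intro reducing_subspace_envelope M) (auto simp: colspan_eq)
  ultimately show ?thesis
    unfolding rank_eq_subspace_dim_colspan reducing_subspace_def
    using subspace_colspan[OF D] by (blast intro: subspace_dim_mono)
qed

lemma semiorth_proj_mult_eq:
  assumes G: "G \<in> carrier_mat m u" and GtG: "transpose_mat G * G = 1\<^sub>m u"
    and A: "A \<in> carrier_mat m n" and sub: "colspan m A \<subseteq> colspan m G"
  shows "G * transpose_mat G * A = A"
proof (rule mat_col_eqI)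
  fix j assume "j < dim_col A"
  then have j: "j < n" using A by simp
  have "col A j \<in> colspan m G"
    using col_mem_colspan[OF A j] sub ..
  then obtain y where y: "y \<in> carrier_vec u" "col A j = G *\<^sub>v y"
    using G by (auto simp: colspan_eq)
  have "col (G * transpose_mat G * A) j = (G * transpose_mat G) *\<^sub>v (G *\<^sub>v y)"
    using G A j y col_mult2[of "G * transpose_mat G" m m A n j] by simp
  also have "\<dots> = G *\<^sub>v ((transpose_mat G * G) *\<^sub>v y)"
    using G y by (simp add: assoc_mult_mat_vec[of _ m u _ m] assoc_mult_mat_vec[of _ u m _ u])
  finally show "col (G * transpose_mat G * A) j = col A j"
    using GtG y by simp
qed (use G A in auto)

lemma reducing_subspace_semiorth_proj_commute:
  assumes S: "S \<in> carrier_mat m m" "transpose_mat S = S"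
    and G: "G \<in> carrier_mat m u" and GtG: "transpose_mat G * G = 1\<^sub>m u"
    and red: "reducing_subspace m S (colspan m G)"
  shows "S * (G * transpose_mat G) = (G * transpose_mat G) * S"
proof -
  define P where "P = G * transpose_mat G"
  have P: "P \<in> carrier_mat m m" "transpose_mat P = P"
    unfolding P_def using G by (auto simp: transpose_mult[of _ m u])
  have "colspan m (S * G) \<subseteq> colspan m G"
  proof
    fix y assume "y \<in> colspan m (S * G)"
    then obtain x where x: "x \<in> carrier_vec u" "y = S *\<^sub>v (G *\<^sub>v x)"
      using S G by (auto simp: colspan_eq[of "S * G" m u])
    then have "G *\<^sub>v x \<in> colspan m G" using G by (auto simp: colspan_eq)
    then show "y \<in> colspan m G" using red x unfolding reducing_subspace_def by auto
  qed
  then have PSG: "P * (S * G) = S * G"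
    unfolding P_def using S G GtG by (intro semiorth_proj_mult_eq) auto
  have "P * S * P = P * S * G * transpose_mat G"
    unfolding P_def using S G by (simp add: assoc_mult_mat[of _ m m G u "transpose_mat G" m])
  also have "\<dots> = S * G * transpose_mat G"
    using S G P PSG by (simp add: assoc_mult_mat[of P m m S m G u])
  also have "\<dots> = S * P"
    unfolding P_def using S G by (simp add: assoc_mult_mat[of S m m G u "transpose_mat G" m])
  finally have PSP: "P * S * P = S * P" .
  have "P * S = transpose_mat (S * P)"
    using S P by (simp add: transpose_mult[of S m m P m])
  also have "\<dots> = transpose_mat (P * S * P)" unfolding PSP ..
  also have "\<dots> = P * S * P"
    using S P by (simp add: transpose_mult[of _ m m _ m] assoc_mult_mat[of _ m m _ m _ m])
  finally show ?thesis unfolding P_def[symmetric] using PSP by simp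
qed

section \<open>Block matrices\<close>

lemma dim_hcat [simp]:
  "dim_row (hcat A B) = dim_row A" "dim_col (hcat A B) = dim_col A + dim_col B"
  unfolding hcat_def by simp_all

lemma col_hcat:
  assumes "j < dim_col A + dim_col B" "dim_row B = dim_row A"
  shows "col (hcat A B) j = (if j < dim_col A then col A j else col B (j - dim_col A))"
  using assms unfolding hcat_def by (auto intro!: eq_vecI)

lemma mult_hcat:
  assumes A: "A \<in> carrier_mat m n" and B: "B \<in> carrier_mat n b" and C: "C \<in> carrier_mat n c"
  shows "A * hcat B C = hcat (A * B) (A * C)"
proof (rule eq_matI)
  fix i j assume "i < dim_row (hcat (A * B) (A * C))" "j < dim_col (hcat (A * B) (A * C))"
  then have ij: "i < m" "j < b + c" using A B C by (auto simp: hcat_def)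
  have "(A * hcat B C) $$ (i, j) = row A i \<bullet> col (hcat B C) j"
    using ij A B C by (simp add: hcat_def)
  also have "\<dots> = hcat (A * B) (A * C) $$ (i, j)"
    using col_hcat[of j B C] ij A B C by (auto simp: hcat_def)
  finally show "(A * hcat B C) $$ (i, j) = hcat (A * B) (A * C) $$ (i, j)" .
qed (use A B C in \<open>auto simp: hcat_def\<close>)

lemma orthonormal_hcat_imp_orthogonal:
  fixes A B :: "'a :: comm_ring_1 mat"
  assumes A: "A \<in> carrier_mat m a" and B: "B \<in> carrier_mat m b"
    and orth: "transpose_mat (hcat A B) * hcat A B = 1\<^sub>m n"
  shows "transpose_mat A * B = 0\<^sub>m a b"
proof (rule eq_matI)
  fix i j assume "i < dim_row (0\<^sub>m a b :: 'a mat)" "j < dim_col (0\<^sub>m a b :: 'a mat)"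
  then have ij: "i < a" "j < b" by auto
  have n: "n = a + b"
    using arg_cong[OF orth, of dim_col] A B by simp
  have "(transpose_mat A * B) $$ (i, j) = (transpose_mat (hcat A B) * hcat A B) $$ (i, a + j)"
    using A B ij col_hcat[of i A B] col_hcat[of "a + j" A B] by simp
  also have "\<dots> = 0" using orth n ij by simp
  finally show "(transpose_mat A * B) $$ (i, j) = 0\<^sub>m a b $$ (i, j)" using ij by simp
qed (use A B in auto)

definition leading_proj :: "nat \<Rightarrow> nat \<Rightarrow> 'a :: zero_neq_one mat" where
  "leading_proj n a = mat n n (\<lambda>(i, j). if i = j \<and> i < a then 1 else 0)"

lemma dim_leading_proj [simp]:
  "dim_row (leading_proj n a) = n" "dim_col (leading_proj n a) = n"
  unfolding leading_proj_def by simp_all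

lemma leading_proj_carrier [simp]: "leading_proj n a \<in> carrier_mat n n"
  by (simp add: carrier_matI)

lemma transpose_leading_proj: "transpose_mat (leading_proj n a) = leading_proj n a"
  unfolding leading_proj_def by (auto intro!: eq_matI)

lemma hcat_mult_leading_proj:
  fixes A B :: "'a :: comm_ring_1 mat"
  assumes A: "A \<in> carrier_mat m a" and B: "B \<in> carrier_mat m b"
  shows "hcat A B * leading_proj (a + b) a = hcat A (0\<^sub>m m b)"
proof (rule eq_matI)
  fix i j assume "i < dim_row (hcat A (0\<^sub>m m b))" "j < dim_col (hcat A (0\<^sub>m m b))"
  then have ij: "i < m" "j < a + b" using A by (auto simp: hcat_def)
  have colL: "col (leading_proj (a + b) a) j = (if j < a then unit_vec (a + b) j else 0\<^sub>v (a + b))"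
    using ij unfolding leading_proj_def by (auto intro!: eq_vecI simp: unit_vec_def)
  have "(hcat A B * leading_proj (a + b) a) $$ (i, j) = row (hcat A B) i \<bullet> col (leading_proj (a + b) a) j"
    using A ij by simp
  also have "\<dots> = (if j < a then hcat A B $$ (i, j) else 0)"
    unfolding colL using A B ij by (auto simp: carrier_vecI)
  also have "\<dots> = hcat A (0\<^sub>m m b) $$ (i, j)"
    using A ij by (simp add: hcat_def)
  finally show "(hcat A B * leading_proj (a + b) a) $$ (i, j) = hcat A (0\<^sub>m m b) $$ (i, j)" .
qed (use A in \<open>auto simp: hcat_def\<close>)

lemma rank_leading_proj_le: "vec_space.rank n (leading_proj n a :: real mat) \<le> a"
proof -
  define E :: "real mat" where "E = mat n a (\<lambda>(i, j). if i = j then 1 else 0)"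
  have E: "E \<in> carrier_mat n a" unfolding E_def by simp
  have "leading_proj n a = E * transpose_mat E"
  proof (rule eq_matI)
    fix i j assume "i < dim_row (E * transpose_mat E)" "j < dim_col (E * transpose_mat E)"
    then have ij: "i < n" "j < n" using E by auto
    have "(E * transpose_mat E) $$ (i, j) = (\<Sum>l<a. (if i = l then 1 else 0) * (if j = l then 1 else 0))"
      using E ij by (simp add: scalar_prod_def E_def atLeast0LessThan)
    also have "\<dots> = (\<Sum>l<a. if l = i then (if i = j then 1 else 0) else 0)"
      by (intro sum.cong) auto
    also have "\<dots> = leading_proj n a $$ (i, j)"
      using ij by (simp add: leading_proj_def)
    finally show "leading_proj n a $$ (i, j) = (E * transpose_mat E) $$ (i, j)" by simp
  qed (use E in \<open>auto simp: leading_proj_def\<close>)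
  then have "vec_space.rank n (leading_proj n a :: real mat) \<le> vec_space.rank n E"
    using E by (simp add: rank_mult_le[of E n a _ n])
  also have "\<dots> \<le> a" using vec_space.rank_le_nc[OF E] .
  finally show ?thesis .
qed

lemma semiorth_split_mult_leading_proj:
  fixes G G0 H H0 :: "'a :: comm_ring_1 mat"
  assumes G: "G \<in> carrier_mat m u" and G0: "G0 \<in> carrier_mat m u0"
    and GtG: "transpose_mat G * G = 1\<^sub>m u" and GtG0: "transpose_mat G * G0 = 0\<^sub>m u u0"
    and H: "H \<in> carrier_mat u a" and H0: "H0 \<in> carrier_mat u0 b"
  shows "hcat (G * H) (G0 * H0) * leading_proj (a + b) a
       = G * transpose_mat G * hcat (G * H) (G0 * H0)"
proof -
  have "G * transpose_mat G * (G * H) = G * H"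
    using G H GtG by (simp add: assoc_mult_mat[of _ m u _ m _ a] assoc_mult_mat[of _ u m _ u _ a, symmetric])
  moreover have "G * transpose_mat G * (G0 * H0) = 0\<^sub>m m b"
    using G G0 H0 GtG0 by (simp add: assoc_mult_mat[of _ m u _ m _ b] assoc_mult_mat[of _ u m _ u0 _ b, symmetric])
  ultimately show ?thesis
    using G G0 H H0 by (simp add: mult_hcat[of _ m m _ a _ b] hcat_mult_leading_proj)
qed

lemma congruence_commute_if_intertwining:
  fixes U D P S :: "'a :: comm_ring_1 mat"
  assumes U: "U \<in> carrier_mat m n" and D: "D \<in> carrier_mat n n"
    and P: "P \<in> carrier_mat m m" and S: "S \<in> carrier_mat m m"
    and Dt: "transpose_mat D = D" and Pt: "transpose_mat P = P"
    and UD: "U * D = P * U" and PS: "P * S = S * P"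
  shows "D * (transpose_mat U * S * U) = (transpose_mat U * S * U) * D"
proof -
  have DUt: "D * transpose_mat U = transpose_mat U * P"
    using transpose_mult[OF U D] transpose_mult[OF P U] UD Dt Pt by simp
  have "D * (transpose_mat U * S * U) = D * transpose_mat U * S * U"
    using U D S by (simp add: assoc_mult_mat[of _ n n _ m _ m] assoc_mult_mat[of _ n n _ m _ n])
  also have "\<dots> = transpose_mat U * (P * S) * U"
    using U P S by (simp add: DUt assoc_mult_mat[of _ n m _ m _ m])
  also have "\<dots> = transpose_mat U * S * (U * D)"
    using U P S by (simp add: PS UD assoc_mult_mat[of _ n m _ m _ m] assoc_mult_mat[of _ n m _ m _ n])
  also have "\<dots> = (transpose_mat U * S * U) * D"
    by (rule assoc_mult_mat[symmetric]) (use U D S in auto)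
  finally show ?thesis .
qed

section \<open>Dimension of the envelope of the conditional covariance\<close>

lemma envelope_dim_le_rank_if_intertwining:
  fixes Sigma U P D alpha :: "real mat"
  assumes Sigma: "sym_pos_def r Sigma"
    and U: "U \<in> carrier_mat r k" and U_rank: "vec_space.rank r U = k"
    and P: "P \<in> carrier_mat r r" "transpose_mat P = P" and SP: "Sigma * P = P * Sigma"
    and D: "D \<in> carrier_mat k k" "transpose_mat D = D" and UD: "U * D = P * U"
    and alpha: "alpha \<in> carrier_mat k p" and PUa: "P * (U * alpha) = U * alpha"
  shows "subspace_dim k (envelope k (minv (transpose_mat U * minv Sigma * U)) (colspan k alpha))
    \<le> vec_space.rank k D"
proof -
  define Si where "Si = minv Sigma"
  have Si: "Si \<in> carrier_mat r r" "Sigma * Si = 1\<^sub>m r" "Si * Sigma = 1\<^sub>m r"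
    unfolding Si_def using Sigma
    by (auto intro: sym_pos_def_minv_carrier sym_pos_def_mult_minv sym_pos_def_minv_mult)
  define N where "N = transpose_mat U * Si * U"
  have N: "sym_pos_def k N"
    unfolding N_def Si_def using sym_pos_def_congruence[OF sym_pos_def_minv[OF Sigma] U U_rank] .
  then have N_carrier: "N \<in> carrier_mat k k" by (simp add: sym_pos_def_def)
  define M where "M = minv N"
  have M: "M \<in> carrier_mat k k" "N * M = 1\<^sub>m k" "M * N = 1\<^sub>m k"
    unfolding M_def using N
    by (auto intro: sym_pos_def_minv_carrier sym_pos_def_mult_minv sym_pos_def_minv_mult)
  have "P * Si = Si * P"
    using mat_commute_inverse[OF _ P(1) Si] Sigma SP by (simp add: sym_pos_def_def)
  then have "D * N = N * D"
    unfolding N_def using congruence_commute_if_intertwining[OF U D(1) P(1) Si(1) D(2) P(2) UD] by simp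
  then have MD: "M * D = D * M"
    using mat_commute_inverse[OF N_carrier D(1) M] by simp
  have "U * (D * alpha) = P * U * alpha"
    using U D alpha by (simp add: UD flip: assoc_mult_mat[of U r k D k alpha p])
  also have "\<dots> = U * alpha"
    using U P alpha PUa by (simp add: assoc_mult_mat[of P r r U k alpha p])
  finally have Da: "D * alpha = alpha"
    using full_rank_mult_left_cancel[OF U U_rank _ alpha] D alpha by simp
  show ?thesis
    using envelope_dim_le_rank_if_commute[OF M(1) D(1) MD alpha Da] unfolding M_def N_def Si_def .
qed

theorem proposition4:
  fixes r k p u u1 :: nat
    and Sigma alpha U Gamma Gamma0 G G0 :: "real mat"
  assumes Sigma: "sym_pos_def r Sigma"
    and alpha: "alpha \<in> carrier_mat k p"
    and U: "U \<in> carrier_mat r k" and U_rank: "vec_space.rank r U = k"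
    and u: "u = subspace_dim r (envelope r Sigma (colspan r (U * alpha)))"
    and Gamma: "Gamma \<in> carrier_mat r u"
    and Gamma_semiorth: "transpose_mat Gamma * Gamma = 1\<^sub>m u"
    and Gamma_basis: "colspan r Gamma = envelope r Sigma (colspan r (U * alpha))"
    and Gamma0: "Gamma0 \<in> carrier_mat r (r - u)"
    and orth: "transpose_mat (hcat Gamma Gamma0) * hcat Gamma Gamma0 = 1\<^sub>m r"
              "hcat Gamma Gamma0 * transpose_mat (hcat Gamma Gamma0) = 1\<^sub>m r"
    and G: "G \<in> carrier_mat u u1" and G_rank: "vec_space.rank u G = u1"
    and G0: "G0 \<in> carrier_mat (r - u) (k - u1)" and G0_rank: "vec_space.rank (r - u) G0 = k - u1"
    and U_split: "U = hcat (Gamma * G) (Gamma0 * G0)"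
  shows "subspace_dim k (envelope k (minv (transpose_mat U * minv Sigma * U)) (colspan k alpha)) \<le> u1
         \<and> u1 \<le> subspace_dim r (envelope r Sigma (colspan r (U * alpha)))"
proof
  show "u1 \<le> subspace_dim r (envelope r Sigma (colspan r (U * alpha)))"
    using rank_le_dim_row[OF G] G_rank u by simp
next
  define P where "P = Gamma * transpose_mat Gamma"
  have P: "P \<in> carrier_mat r r" "transpose_mat P = P"
    unfolding P_def using Gamma by (auto simp: transpose_mult[of _ r u])
  have S: "Sigma \<in> carrier_mat r r" "transpose_mat Sigma = Sigma"
    using Sigma by (auto simp: sym_pos_def_def)
  have Ua: "U * alpha \<in> carrier_mat r p" using U alpha by simp
  have "reducing_subspace r Sigma (colspan r Gamma)"
    unfolding Gamma_basis using S Ua by (intro reducing_subspace_envelope) (auto simp: colspan_eq)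
  then have SP: "Sigma * P = P * Sigma"
    unfolding P_def by (rule reducing_subspace_semiorth_proj_commute[OF S Gamma Gamma_semiorth])
  have PUa: "P * (U * alpha) = U * alpha"
    unfolding P_def using subset_envelope
    by (intro semiorth_proj_mult_eq[OF Gamma Gamma_semiorth Ua]) (simp add: Gamma_basis)
  have "u1 + (k - u1) = k" using U U_split G by auto
  then have UD: "U * leading_proj k u1 = P * U"
    unfolding P_def U_split
    using semiorth_split_mult_leading_proj[OF Gamma Gamma0 Gamma_semiorth
        orthonormal_hcat_imp_orthogonal[OF Gamma Gamma0 orth(1)] G G0] by simp
  have "subspace_dim k (envelope k (minv (transpose_mat U * minv Sigma * U)) (colspan k alpha))
      \<le> vec_space.rank k (leading_proj k u1 :: real mat)"
    using envelope_dim_le_rank_if_intertwining[OF Sigma U U_rank P SP _ _ UD alpha PUa]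
    by (simp add: transpose_leading_proj)
  also have "\<dots> \<le> u1" by (rule rank_leading_proj_le)
  finally show "subspace_dim k (envelope k (minv (transpose_mat U * minv Sigma * U)) (colspan k alpha)) \<le> u1" .
qed

end
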